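(* Let $\lambda>0$, $\xi>0$, $v_2<v_1$ with either $v_2<0<v_1$ or $0<v_2<v_1$, $q\in[0,1]$, and let $\tilde X(t)$ be the position of the extended telegraph process driven by GCPs with parameter $\lambda$ with Poissonian resets to the origin at rate $\xi$, with $\tilde X(0)=0$ and random initial velocity $V(0)=V_0$ where $P\{V_0=v_1\}=q$, $P\{V_0=v_2\}=1-q$. Then for $t>0$ and $v_2t<x<v_1t$ its (generalized) density $\tilde p(x,t)$ equals $$ \tilde p(x,t)=qH_1(x,t)+(1-q)H_2(x,t)+\mathbb 1_{\{v_2t<x<v_1t\}}\frac{\lambda e^{-\xi t}}{(v_1-v_2)(1+\lambda t)}+\frac{\xi e^{\xi/\lambda}}{v_1-v_2}\boldsymbol I(x,t)\Gamma_\lambda^\xi(x,t), $$ where $H_j(x,t)=\frac{e^{-\xi t}\delta(x-v_jt)}{1+\lambda t}+\mathrm{sgn}(v_j)\mathbb 1_{\{0<\frac{x}{v_j}<t\}}\frac{\xi e^{-\xi x/v_j}}{v_j+\lambda x}$, $j=1,2$.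
   Context: GCP with intensity $\lambda>0$: a Poisson process whose rate is random, exponentially distributed with mean $\lambda$; increments satisfy $P\{\tilde N_\lambda(t+s)-\tilde N_\lambda(t)=k\}=\frac{1}{1+\lambda s}(\frac{\lambda s}{1+\lambda s})^k$. The process: a particle starts at the origin with initial velocity $V(0)$ ($v_1,v_2\neq0$, $v_2<v_1$), moves with velocity alternating between $v_1$ and $v_2$, the periods at velocity $v_1$ and at $v_2$ being governed by two independent GCPs of intensity $\lambda$; additionally it is instantaneously reset to the origin at the epochs of an independent Poisson process of rate $\xi$, restarting afresh with its initial velocity. Conditional on $V(0)=v_j$, the density is $\tilde p(x,t|v_j)=e^{-\xi t}p(x,t|v_j)+\xi\int_0^te^{-\xi s}p(x,s|v_j)ds$, where $p(x,t|v_j)=\frac{\delta(x-v_jt)}{1+\lambda t}+\mathbb 1_{\{v_2t<x<v_1t\}}\frac{\lambda}{(v_1-v_2)(1+\lambda t)}$ ($\delta$ Dirac delta); with random initial velocity, $\tilde p(x,t)=q\tilde p(x,t|v_1)+(1-q)\tilde p(x,t|v_2)$. Notation: $M_x=\max\{x/v_1,x/v_2\}$, $m_{x,t}=\min\{x/v_2,t\}$; $\Gamma(a,z_0,z_1)=\int_{z_0}^{z_1}s^{a-1}e^{-s}ds$; $\Gamma_\lambda^\xi(x,t)=\Gamma[0,(M_x+\frac1\lambda)\xi,(t+\frac1\lambda)\xi]$ if $v_2<0<v_1$, $=\Gamma[0,(\frac x{v_1}+\frac1\lambda)\xi,(m_{x,t}+\frac1\lambda)\xi]$ if $0<v_2<v_1$;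 $\boldsymbol I(x,t)=\mathbb 1_{\{\min\{v_2t,0\}<x<v_1t\}}$. *)

theory Defs
  imports "HOL-Analysis.Analysis"
begin

text \<open>Law of the telegraph process without resets, conditional on V(0) = vj:
  atom of mass 1/(1+lam s) at vj*s plus the uniform part with density
  lam/((v1-v2)(1+lam s)) on the open interval (v2 s, v1 s).\<close>
definition P_cond :: "real \<Rightarrow> real \<Rightarrow> real \<Rightarrow> real \<Rightarrow> real \<Rightarrow> real set \<Rightarrow> real" where
  "P_cond lam v1 v2 vj s A =
     indicator A (vj * s) / (1 + lam * s)
     + (LINT x : A \<inter> {v2 * s <..< v1 * s} | lborel. lam / ((v1 - v2) * (1 + lam * s)))"

text \<open>Law of the process with Poissonian resets at rate xi, conditional on V(0) = vj:
  e^{-xi t} p(.,t|vj) + xi * int_0^t e^{-xi s} p(.,s|vj) ds.\<close>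
definition Ptilde_cond :: "real \<Rightarrow> real \<Rightarrow> real \<Rightarrow> real \<Rightarrow> real \<Rightarrow> real \<Rightarrow> real set \<Rightarrow> real" where
  "Ptilde_cond lam xi v1 v2 vj t A =
     exp (- xi * t) * P_cond lam v1 v2 vj t A
     + xi * (LINT s : {0..t} | lborel. exp (- xi * s) * P_cond lam v1 v2 vj s A)"

definition Ptilde :: "real \<Rightarrow> real \<Rightarrow> real \<Rightarrow> real \<Rightarrow> real \<Rightarrow> real \<Rightarrow> real set \<Rightarrow> real" where
  "Ptilde lam xi v1 v2 q t A =
     q * Ptilde_cond lam xi v1 v2 v1 t A + (1 - q) * Ptilde_cond lam xi v1 v2 v2 t A"

definition Gamma_inc :: "real \<Rightarrow> real \<Rightarrow> real \<Rightarrow> real" where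
  "Gamma_inc a z0 z1 = (LINT s : {z0..z1} | lborel. s powr (a - 1) * exp (- s))"

definition M_x :: "real \<Rightarrow> real \<Rightarrow> real \<Rightarrow> real" where
  "M_x v1 v2 x = max (x / v1) (x / v2)"

definition m_xt :: "real \<Rightarrow> real \<Rightarrow> real \<Rightarrow> real" where
  "m_xt v2 x t = min (x / v2) t"

definition Gamma_lam_xi :: "real \<Rightarrow> real \<Rightarrow> real \<Rightarrow> real \<Rightarrow> real \<Rightarrow> real \<Rightarrow> real" where
  "Gamma_lam_xi lam xi v1 v2 x t =
     (if v2 < 0 \<and> 0 < v1
      then Gamma_inc 0 ((M_x v1 v2 x + 1 / lam) * xi) ((t + 1 / lam) * xi)
      else Gamma_inc 0 ((x / v1 + 1 / lam) * xi) ((m_xt v2 x t + 1 / lam) * xi))"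

definition I_set :: "real \<Rightarrow> real \<Rightarrow> real \<Rightarrow> real set" where
  "I_set v1 v2 t = {min (v2 * t) 0 <..< v1 * t}"

text \<open>Absolutely continuous (non-delta) part of H_j(x,t).\<close>
definition H_ac :: "real \<Rightarrow> real \<Rightarrow> real \<Rightarrow> real \<Rightarrow> real \<Rightarrow> real" where
  "H_ac lam xi vj x t =
     sgn vj * indicator {y. 0 < y / vj \<and> y / vj < t} x * (xi * exp (- xi * x / vj) / (vj + lam * x))"

text \<open>Weight of the Dirac delta at vj*t in H_j(x,t).\<close>
definition H_atom :: "real \<Rightarrow> real \<Rightarrow> real \<Rightarrow> real" where
  "H_atom lam xi t = exp (- xi * t) / (1 + lam * t)"

text \<open>Absolutely continuous part of the generalised density p~(x,t).\<close>
definition ptilde_ac :: "real \<Rightarrow> real \<Rightarrow> real \<Rightarrow> real \<Rightarrow> real \<Rightarrow> real \<Rightarrow> real \<Rightarrow> real" where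
  "ptilde_ac lam xi v1 v2 q x t =
     q * H_ac lam xi v1 x t + (1 - q) * H_ac lam xi v2 x t
     + indicator {v2 * t <..< v1 * t} x * (lam * exp (- xi * t) / ((v1 - v2) * (1 + lam * t)))
     + xi * exp (xi / lam) / (v1 - v2) * indicator (I_set v1 v2 t) x * Gamma_lam_xi lam xi v1 v2 x t"

end

theory Submission
  imports Defs
begin

text \<open>The atom of p(., s | v_j) at v_j s becomes, under the substitution x = v_j s, the
  absolutely continuous part of H_j. For the uniform part one integrates in s first
  (Fubini): the times s in [0, t] with v_2 s < x < v_1 s form, up to endpoints, an
  interval, and u = xi (s + 1/lam) turns e^{-xi s}/(1 + lam s) into the incomplete
  gamma integrand u^{-1} e^{-u}.\<close>

lemma abs_exp_indicator_div_le_1: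
  fixes lam xi s :: real
  assumes "0 \<le> lam" and "0 \<le> xi" and "0 \<le> s"
  shows "\<bar>exp (- xi * s) * (indicator S y / (1 + lam * s))\<bar> \<le> 1"
proof -
  have denominator: "1 \<le> 1 + lam * s"
    using assms by simp
  moreover have "exp (- xi * s) \<le> 1"
    using assms by simp
  ultimately have "exp (- xi * s) \<le> 1 + lam * s"
    by linarith
  with denominator show ?thesis
    by (auto simp: indicator_def divide_le_eq)
qed

lemma borel_measurable_indicator_greaterThanLessThan[measurable]:
  fixes f g h :: "'a \<Rightarrow> real"
  assumes [measurable]: "f \<in> borel_measurable M" "g \<in> borel_measurable M"
    and [measurable]: "h \<in> borel_measurable M"
  shows "(\<lambda>w. indicator {f w <..< g w} (h w) :: real) \<in> borel_measurable M"
proof -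
  have "(\<lambda>w. indicator {f w <..< g w} (h w) :: real)
      = (\<lambda>w. if f w < h w \<and> h w < g w then 1 else 0)"
    by (auto simp: indicator_def)
  also have "\<dots> \<in> borel_measurable M"
    by measurable
  finally show ?thesis .
qed

lemma integral_exp_div_affine_eq_Gamma_inc:
  fixes lam xi lo hi :: real
  assumes lam: "0 < lam" and xi: "0 < xi" and lo: "0 < 1 + lam * lo"
  shows "(\<integral>s. indicator {lo..hi} s * (exp (- xi * s) / (1 + lam * s)) \<partial>lborel)
         = exp (xi / lam) / lam * Gamma_inc 0 ((lo + 1 / lam) * xi) ((hi + 1 / lam) * xi)"
proof -
  define u where "u s = xi / lam + xi * s" for s
  define z0 z1 where "z0 = (lo + 1 / lam) * xi" and "z1 = (hi + 1 / lam) * xi"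
  have u_ind: "indicator {z0..z1} (u s) = (indicator {lo..hi} s :: real)" for s
  proof -
    have "u s \<in> {z0..z1} \<longleftrightarrow> s \<in> {lo..hi}"
      using xi by (auto simp: u_def z0_def z1_def algebra_simps)
    then show ?thesis
      by (simp only: indicator_def)
  qed
  have integrand: "xi * (indicator {z0..z1} (u s) * (u s powr (0 - 1) * exp (- u s)))
      = lam * exp (- xi / lam) * (indicator {lo..hi} s * (exp (- xi * s) / (1 + lam * s)))" for s
  proof (cases "s \<in> {lo..hi}")
    case True
    then have "lam * lo \<le> lam * s"
      using lam by (intro mult_left_mono) auto
    then have pos: "0 < 1 + lam * s"
      using lo by linarith
    have "u s = xi * (1 + lam * s) / lam"
      using lam by (simp add: u_def field_simps)
    with pos have "u s powr (0 - 1) = lam / (xi * (1 + lam * s))"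
      using lam xi by (simp add: powr_minus_divide)
    moreover have "exp (- u s) = exp (- xi / lam) * exp (- xi * s)"
      by (simp add: u_def flip: exp_add)
    ultimately show ?thesis
      using True u_ind pos lam xi by (simp add: divide_simps)
  qed (simp add: u_ind)
  have "Gamma_inc 0 z0 z1 = (\<integral>u. indicator {z0..z1} u * (u powr (0 - 1) * exp (- u)) \<partial>lborel)"
    unfolding Gamma_inc_def set_lebesgue_integral_def by simp
  also have "\<dots> = \<bar>xi\<bar> *\<^sub>R (\<integral>s. indicator {z0..z1} (u s) * (u s powr (0 - 1) * exp (- u s)) \<partial>lborel)"
    unfolding u_def by (rule lborel_integral_real_affine) (use xi in simp)
  also have "\<dots> = (\<integral>s. lam * exp (- xi / lam) * (indicator {lo..hi} s * (exp (- xi * s) / (1 + lam * s))) \<partial>lborel)"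
    by (simp only: real_scaleR_def abs_of_pos[OF xi] flip: integral_mult_right_zero integrand)
  also have "\<dots> = lam * exp (- xi / lam) * (\<integral>s. indicator {lo..hi} s * (exp (- xi * s) / (1 + lam * s)) \<partial>lborel)"
    by (rule integral_mult_right_zero)
  finally show ?thesis
    using lam by (simp add: z0_def z1_def exp_minus field_simps)
qed

lemma I_set_memI:
  fixes v1 v2 s t x :: real
  assumes "0 \<le> v1" and "0 \<le> s" and "s \<le> t" and "v2 * s < x" and "x < v1 * s"
  shows "x \<in> I_set v1 v2 t"
proof -
  have "v1 * s \<le> v1 * t"
    using assms by (intro mult_left_mono) auto
  moreover have "min (v2 * t) 0 \<le> v2 * s"
    using assms by (cases "v2 < 0") (auto simp: min_le_iff_disj intro: mult_left_mono_neg)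
  ultimately show ?thesis
    using assms unfolding I_set_def by auto
qed

lemma M_x_nonneg:
  fixes v1 v2 x :: real
  assumes "v2 < 0" and "0 < v1"
  shows "0 \<le> M_x v1 v2 x"
  using assms by (cases "0 \<le> x") (auto simp: M_x_def le_max_iff_disj zero_le_divide_iff)

lemma AE_support_times_two_sided:
  fixes v1 v2 t x :: real
  assumes "v2 < 0" and "0 < v1"
  shows "AE s in lborel. indicator {0..t} s * indicator {v2 * s <..< v1 * s} x
                         = (indicator {M_x v1 v2 x..t} s :: real)"
  using AE_lborel_singleton[of "M_x v1 v2 x"]
proof eventually_elim
  case (elim s)
  have "v2 * s < x \<longleftrightarrow> x / v2 < s"
    using assms by (simp add: neg_divide_less_eq mult.commute)
  moreover have "x < v1 * s \<longleftrightarrow> x / v1 < s"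
    using assms by (simp add: pos_divide_less_eq mult.commute)
  ultimately show ?case
    using elim M_x_nonneg[OF assms, of x] by (auto simp: indicator_def M_x_def)
qed

lemma AE_support_times_one_sided:
  fixes v1 v2 t x :: real
  assumes "0 < v2" and "0 < v1" and "0 < x"
  shows "AE s in lborel. indicator {0..t} s * indicator {v2 * s <..< v1 * s} x
                         = (indicator {x / v1..m_xt v2 x t} s :: real)"
  using AE_lborel_singleton[of "x / v1"] AE_lborel_singleton[of "x / v2"]
proof eventually_elim
  case (elim s)
  have "v2 * s < x \<longleftrightarrow> s < x / v2"
    using assms by (simp add: pos_less_divide_eq mult.commute)
  moreover have "x < v1 * s \<longleftrightarrow> x / v1 < s"
    using assms by (simp add: pos_divide_less_eq mult.commute)
  moreover have "0 < x / v1"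
    using assms by simp
  ultimately show ?case
    using elim by (auto simp: indicator_def m_xt_def)
qed

lemma integral_support_times_eq_Gamma_lam_xi:
  fixes lam xi v1 v2 t x :: real
  assumes lam: "0 < lam" and xi: "0 < xi" and v: "v2 < v1"
    and regime: "(v2 < 0 \<and> 0 < v1) \<or> 0 < v2" and t: "0 \<le> t"
  shows "(\<integral>s. indicator {0..t} s * indicator {v2 * s <..< v1 * s} x * (exp (- xi * s) / (1 + lam * s)) \<partial>lborel)
       = exp (xi / lam) / lam * indicator (I_set v1 v2 t) x * Gamma_lam_xi lam xi v1 v2 x t"
proof (cases "x \<in> I_set v1 v2 t")
  case False
  have "indicator {0..t} s * indicator {v2 * s <..< v1 * s} x = (0::real)" for s
    using False I_set_memI[of v1 s t v2 x] regime v by (auto simp: indicator_def)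
  then have "(\<lambda>s. indicator {0..t} s * indicator {v2 * s <..< v1 * s} x * (exp (- xi * s) / (1 + lam * s)))
      = (\<lambda>s. 0::real)"
    by (metis mult_zero_left)
  then show ?thesis
    using False by simp
next
  case x: True
  obtain lo hi where lo: "0 \<le> lo"
    and ae: "AE s in lborel.
               indicator {0..t} s * indicator {v2 * s <..< v1 * s} x = (indicator {lo..hi} s :: real)"
    and Gamma: "Gamma_lam_xi lam xi v1 v2 x t = Gamma_inc 0 ((lo + 1 / lam) * xi) ((hi + 1 / lam) * xi)"
  proof (cases "v2 < 0 \<and> 0 < v1")
    case True
    then show ?thesis
      by (intro that[OF M_x_nonneg AE_support_times_two_sided]) (auto simp: Gamma_lam_xi_def)
  next
    case False
    then have "0 < v2" and "0 < v1"
      using regime v by auto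
    moreover have "0 < x"
      using x t \<open>0 < v2\<close> by (simp add: I_set_def)
    ultimately show ?thesis
      by (intro that[OF _ AE_support_times_one_sided]) (auto simp: Gamma_lam_xi_def)
  qed
  have "(\<integral>s. indicator {0..t} s * indicator {v2 * s <..< v1 * s} x * (exp (- xi * s) / (1 + lam * s)) \<partial>lborel)
      = (\<integral>s. indicator {lo..hi} s * (exp (- xi * s) / (1 + lam * s)) \<partial>lborel)"
    by (rule integral_cong_AE) (use ae in auto)
  also have "\<dots> = exp (xi / lam) / lam * Gamma_inc 0 ((lo + 1 / lam) * xi) ((hi + 1 / lam) * xi)"
    using lam xi lo by (intro integral_exp_div_affine_eq_Gamma_inc) (auto simp: add_pos_nonneg)
  finally show ?thesis
    using x Gamma by simp
qed

definition p_ac :: "real \<Rightarrow> real \<Rightarrow> real \<Rightarrow> real \<Rightarrow> real \<Rightarrow> real" where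
  "p_ac lam v1 v2 s x = indicator {v2 * s <..< v1 * s} x * (lam / ((v1 - v2) * (1 + lam * s)))"

lemma P_cond_eq:
  "P_cond lam v1 v2 vj s A
     = indicator A (vj * s) / (1 + lam * s) + (LINT x : A | lborel. p_ac lam v1 v2 s x)"
  unfolding P_cond_def p_ac_def set_lebesgue_integral_def by (simp add: indicator_inter_arith mult.assoc)

lemma abs_p_ac_le:
  fixes lam v1 v2 s x :: real
  assumes "0 \<le> lam" and "v2 < v1" and "0 \<le> s"
  shows "\<bar>p_ac lam v1 v2 s x\<bar> \<le> lam / (v1 - v2)"
proof (cases "x \<in> {v2 * s <..< v1 * s}")
  case True
  have "(v1 - v2) * 1 \<le> (v1 - v2) * (1 + lam * s)"
    using assms by (intro mult_left_mono) auto
  then have "lam / ((v1 - v2) * (1 + lam * s)) \<le> lam / (v1 - v2)"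
    using assms by (intro frac_le) auto
  moreover have "0 \<le> lam / ((v1 - v2) * (1 + lam * s))"
    using assms by simp
  moreover have "p_ac lam v1 v2 s x = lam / ((v1 - v2) * (1 + lam * s))"
    using True by (simp add: p_ac_def)
  ultimately show ?thesis
    by linarith
qed (use assms in \<open>simp add: p_ac_def\<close>)

lemma set_integrable_p_ac:
  fixes lam v1 v2 s :: real
  assumes "0 \<le> lam" and "v2 < v1" and "0 \<le> s" and [measurable]: "A \<in> sets borel"
  shows "set_integrable lborel A (p_ac lam v1 v2 s)"
  unfolding set_integrable_def
proof (rule integrableI_bounded_set[where A="{v2 * s .. v1 * s}" and B="lam / (v1 - v2)"])
  show "(\<lambda>x. indicator A x *\<^sub>R p_ac lam v1 v2 s x) \<in> borel_measurable lborel"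
    unfolding p_ac_def by measurable
  show "AE x in lborel. x \<in> {v2 * s .. v1 * s}
          \<longrightarrow> norm (indicator A x *\<^sub>R p_ac lam v1 v2 s x) \<le> lam / (v1 - v2)"
    using abs_p_ac_le[OF assms(1-3)] assms(1,2) by (auto simp: indicator_def)
  show "AE x in lborel. x \<notin> {v2 * s .. v1 * s} \<longrightarrow> indicator A x *\<^sub>R p_ac lam v1 v2 s x = 0"
    by (intro AE_I2) (auto simp: p_ac_def indicator_def)
qed (simp_all add: emeasure_lborel_Icc_eq)

lemma abs_mult_H_ac_scaled:
  fixes lam xi vj s t :: real
  assumes lam: "0 \<le> lam" and vj: "vj \<noteq> 0"
  shows "\<bar>vj\<bar> * H_ac lam xi vj (vj * s) t
         = indicator {0<..<t} s * (xi * exp (- xi * s) / (1 + lam * s))"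
proof -
  have "vj * s / vj = s" and "- xi * (vj * s) / vj = - xi * s"
    and "vj + lam * (vj * s) = vj * (1 + lam * s)"
    using vj by (simp_all add: algebra_simps)
  moreover have "\<bar>vj\<bar> * (sgn vj * c / (vj * d)) = c / d" for c d :: real
    using vj by (cases "0 < vj") (auto simp: sgn_if)
  ultimately show ?thesis
    by (simp add: H_ac_def indicator_def)
qed

lemma set_integrable_reset_atom:
  fixes lam xi vj t :: real
  assumes lam: "0 \<le> lam" and xi: "0 \<le> xi" and [measurable]: "A \<in> sets borel"
  shows "set_integrable lborel {0..t} (\<lambda>s. exp (- xi * s) * (indicator A (vj * s) / (1 + lam * s)))"
  unfolding set_integrable_def
proof (rule integrableI_bounded_set_indicator[where B=1])
  show "AE s in lborel. s \<in> {0..t}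
          \<longrightarrow> norm (exp (- xi * s) * (indicator A (vj * s) / (1 + lam * s))) \<le> 1"
  proof (intro AE_I2 impI)
    fix s assume "s \<in> {0..t}"
    then show "norm (exp (- xi * s) * (indicator A (vj * s) / (1 + lam * s))) \<le> 1"
      using abs_exp_indicator_div_le_1[OF lam xi, of s A "vj * s"] by simp
  qed
qed (simp_all add: emeasure_lborel_Icc_eq)

lemma reset_integral_atom:
  fixes lam xi vj t :: real
  assumes lam: "0 \<le> lam" and xi: "0 \<le> xi" and vj: "vj \<noteq> 0" and [measurable]: "A \<in> sets borel"
  shows "set_integrable lborel A (\<lambda>x. H_ac lam xi vj x t)"
    and "xi * (LINT s : {0..t} | lborel. exp (- xi * s) * (indicator A (vj * s) / (1 + lam * s)))
         = (LINT x : A | lborel. H_ac lam xi vj x t)"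
proof -
  define g where "g s = indicator {0..t} s * (exp (- xi * s) * (indicator A (vj * s) / (1 + lam * s)))"
    for s
  define f where "f x = indicator A x * H_ac lam xi vj x t" for x
  have [measurable]: "g \<in> borel_measurable borel" "f \<in> borel_measurable borel"
    unfolding g_def f_def H_ac_def by measurable
  have g_int: "integrable lborel g"
    using set_integrable_reset_atom[OF lam xi, of A t vj]
    by (simp add: set_integrable_def g_def[abs_def])
  have f_affine: "AE s in lborel. f (0 + vj * s) = xi / \<bar>vj\<bar> * g s"
    using AE_lborel_singleton[of 0] AE_lborel_singleton[of t]
  proof eventually_elim
    case (elim s)
    have ind: "indicator {0<..<t} s = (indicator {0..t} s :: real)"
      using elim by (auto simp: indicator_def)
    have "\<bar>vj\<bar> * f (vj * s) = indicator A (vj * s) * (\<bar>vj\<bar> * H_ac lam xi vj (vj * s) t)"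
      by (simp add: f_def mult_ac)
    also have "\<dots> = indicator A (vj * s)
                      * (indicator {0..t} s * (xi * exp (- xi * s) / (1 + lam * s)))"
      by (simp only: abs_mult_H_ac_scaled[OF lam vj] ind)
    also have "\<dots> = \<bar>vj\<bar> * (xi / \<bar>vj\<bar> * g s)"
      using vj by (simp add: g_def mult_ac)
    finally show ?case
      using vj by (simp add: field_simps)
  qed
  have "integrable lborel (\<lambda>s. f (0 + vj * s)) \<longleftrightarrow> integrable lborel (\<lambda>s. xi / \<bar>vj\<bar> * g s)"
    by (rule integrable_cong_AE[OF _ _ f_affine]) simp_all
  then have f_int: "integrable lborel f"
    using g_int lborel_integrable_real_affine_iff[OF vj, of f 0] by simp
  then show "set_integrable lborel A (\<lambda>x. H_ac lam xi vj x t)"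
    by (simp add: set_integrable_def f_def[abs_def])
  have "(\<integral>x. f x \<partial>lborel) = \<bar>vj\<bar> *\<^sub>R (\<integral>s. f (0 + vj * s) \<partial>lborel)"
    by (rule lborel_integral_real_affine[OF vj])
  also have "(\<integral>s. f (0 + vj * s) \<partial>lborel) = (\<integral>s. xi / \<bar>vj\<bar> * g s \<partial>lborel)"
    by (rule integral_cong_AE[OF _ _ f_affine]) simp_all
  also have "\<bar>vj\<bar> *\<^sub>R (\<integral>s. xi / \<bar>vj\<bar> * g s \<partial>lborel) = xi * (\<integral>s. g s \<partial>lborel)"
    using vj by simp
  finally show "xi * (LINT s : {0..t} | lborel. exp (- xi * s) * (indicator A (vj * s) / (1 + lam * s)))
      = (LINT x : A | lborel. H_ac lam xi vj x t)"
    unfolding set_lebesgue_integral_def f_def[abs_def] g_def[abs_def] by simp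
qed

definition reset_ac :: "real \<Rightarrow> real \<Rightarrow> real \<Rightarrow> real \<Rightarrow> real \<Rightarrow> real \<Rightarrow> real" where
  "reset_ac lam xi v1 v2 x t =
     xi * exp (xi / lam) / (v1 - v2) * indicator (I_set v1 v2 t) x * Gamma_lam_xi lam xi v1 v2 x t"

lemma integrable_reset_p_ac_kernel:
  fixes lam xi v1 v2 t :: real
  assumes lam: "0 \<le> lam" and xi: "0 \<le> xi" and v: "v2 < v1" and v1: "0 \<le> v1"
    and [measurable]: "A \<in> sets borel"
  shows "integrable (lborel \<Otimes>\<^sub>M lborel)
           (\<lambda>(s, x). indicator {0..t} s * exp (- xi * s) * indicator A x * p_ac lam v1 v2 s x)"
    (is "integrable _ (\<lambda>(s, x). ?F s x)")
proof (rule integrableI_bounded_set[where A="{0..t} \<times> {min (v2 * t) 0..v1 * t}"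
                                      and B="lam / (v1 - v2)"])
  show "(\<lambda>(s, x). ?F s x) \<in> borel_measurable (lborel \<Otimes>\<^sub>M lborel)"
    unfolding p_ac_def by measurable
  show "emeasure (lborel \<Otimes>\<^sub>M lborel) ({0..t} \<times> {min (v2 * t) 0..v1 * t}) < \<infinity>"
    by (simp add: lborel.emeasure_pair_measure_Times emeasure_lborel_Icc_eq ennreal_mult_less_top)
  show "AE p in lborel \<Otimes>\<^sub>M lborel. p \<in> {0..t} \<times> {min (v2 * t) 0..v1 * t}
          \<longrightarrow> norm (case p of (s, x) \<Rightarrow> ?F s x) \<le> lam / (v1 - v2)"
  proof (intro AE_I2 impI)
    fix p assume "p \<in> {0..t} \<times> {min (v2 * t) 0..v1 * t}"
    then obtain s x where p: "p = (s, x)" and s: "0 \<le> s"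
      by auto
    have "\<bar>indicator {0..t} s * exp (- xi * s) * indicator A x\<bar> \<le> (1::real)"
      using s xi by (simp add: indicator_def abs_mult)
    then have "\<bar>?F s x\<bar> \<le> \<bar>p_ac lam v1 v2 s x\<bar>"
      unfolding abs_mult[of _ "p_ac lam v1 v2 s x"] by (intro mult_left_le_one_le) auto
    also have "\<dots> \<le> lam / (v1 - v2)"
      using lam v s by (rule abs_p_ac_le)
    finally show "norm (case p of (s, x) \<Rightarrow> ?F s x) \<le> lam / (v1 - v2)"
      using p by simp
  qed
  show "AE p in lborel \<Otimes>\<^sub>M lborel. p \<notin> {0..t} \<times> {min (v2 * t) 0..v1 * t}
          \<longrightarrow> (case p of (s, x) \<Rightarrow> ?F s x) = 0"
  proof (intro AE_I2 impI)
    fix p assume p_out: "p \<notin> {0..t} \<times> {min (v2 * t) 0..v1 * t}"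
    obtain s x where p: "p = (s, x)"
      by (cases p)
    have "?F s x = 0"
    proof (rule ccontr)
      assume "?F s x \<noteq> 0"
      then have "0 \<le> s" "s \<le> t" "v2 * s < x" "x < v1 * s"
        by (auto simp: p_ac_def indicator_def)
      moreover from this have "x \<in> I_set v1 v2 t"
        using v1 by (intro I_set_memI)
      ultimately show False
        using p_out p by (auto simp: I_set_def)
    qed
    then show "(case p of (s, x) \<Rightarrow> ?F s x) = 0"
      using p by simp
  qed
qed simp

lemma integral_time_p_ac_eq_reset_ac:
  fixes lam xi v1 v2 t x :: real
  assumes lam: "0 < lam" and xi: "0 < xi" and v: "v2 < v1"
    and regime: "(v2 < 0 \<and> 0 < v1) \<or> 0 < v2" and t: "0 \<le> t"
  shows "xi * (\<integral>s. indicator {0..t} s * exp (- xi * s) * indicator A x * p_ac lam v1 v2 s x \<partial>lborel)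
         = indicator A x * reset_ac lam xi v1 v2 x t"
    (is "xi * ?I = _")
proof -
  have "indicator {0..t} s * exp (- xi * s) * indicator A x * p_ac lam v1 v2 s x
      = lam / (v1 - v2) * indicator A x
        * (indicator {0..t} s * indicator {v2 * s <..< v1 * s} x * (exp (- xi * s) / (1 + lam * s)))" for s
    by (simp add: p_ac_def ac_simps)
  then have "?I = lam / (v1 - v2) * indicator A x
        * (\<integral>s. indicator {0..t} s * indicator {v2 * s <..< v1 * s} x * (exp (- xi * s) / (1 + lam * s)) \<partial>lborel)"
    by (simp only: integral_mult_right_zero)
  also have "\<dots> = lam / (v1 - v2) * indicator A x
                  * (exp (xi / lam) / lam * indicator (I_set v1 v2 t) x * Gamma_lam_xi lam xi v1 v2 x t)"
    by (simp only: integral_support_times_eq_Gamma_lam_xi[OF lam xi v regime t])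
  finally have integral_eq: "?I = \<dots>" .
  show ?thesis
    unfolding integral_eq reset_ac_def using lam v by (simp add: field_simps)
qed

lemma reset_integral_p_ac:
  fixes lam xi v1 v2 t :: real
  assumes lam: "0 < lam" and xi: "0 < xi" and v: "v2 < v1"
    and regime: "(v2 < 0 \<and> 0 < v1) \<or> 0 < v2" and t: "0 \<le> t" and A: "A \<in> sets borel"
  shows "set_integrable lborel {0..t} (\<lambda>s. exp (- xi * s) * (LINT x : A | lborel. p_ac lam v1 v2 s x))"
    and "set_integrable lborel A (\<lambda>x. reset_ac lam xi v1 v2 x t)"
    and "xi * (LINT s : {0..t} | lborel. exp (- xi * s) * (LINT x : A | lborel. p_ac lam v1 v2 s x))
         = (LINT x : A | lborel. reset_ac lam xi v1 v2 x t)"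
proof -
  define F where "F s x = indicator {0..t} s * exp (- xi * s) * indicator A x * p_ac lam v1 v2 s x"
    for s x :: real
  have "0 \<le> v1"
    using regime v by auto
  then have F_int: "integrable (lborel \<Otimes>\<^sub>M lborel) (\<lambda>(s, x). F s x)"
    unfolding F_def using lam xi v A by (intro integrable_reset_p_ac_kernel) auto
  have integral_x: "(\<integral>x. F s x \<partial>lborel)
      = indicator {0..t} s * (exp (- xi * s) * (LINT x : A | lborel. p_ac lam v1 v2 s x))" for s
    unfolding F_def set_lebesgue_integral_def by (simp add: mult.assoc)
  have integral_s: "xi * (\<integral>s. F s x \<partial>lborel) = indicator A x * reset_ac lam xi v1 v2 x t" for x
    unfolding F_def by (rule integral_time_p_ac_eq_reset_ac[OF lam xi v regime t])
  show "set_integrable lborel {0..t} (\<lambda>s. exp (- xi * s) * (LINT x : A | lborel. p_ac lam v1 v2 s x))"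
    using lborel_pair.integrable_fst[OF F_int] by (simp add: integral_x set_integrable_def)
  show "set_integrable lborel A (\<lambda>x. reset_ac lam xi v1 v2 x t)"
    using integrable_mult_right[OF lborel_pair.integrable_snd[OF F_int], of xi]
    by (simp add: integral_s set_integrable_def)
  have "xi * (LINT s : {0..t} | lborel. exp (- xi * s) * (LINT x : A | lborel. p_ac lam v1 v2 s x))
      = xi * (\<integral>s. \<integral>x. F s x \<partial>lborel \<partial>lborel)"
    by (simp add: integral_x set_lebesgue_integral_def)
  also have "\<dots> = (\<integral>x. xi * (\<integral>s. F s x \<partial>lborel) \<partial>lborel)"
    using lborel_pair.Fubini_integral[OF F_int] by simp
  also have "\<dots> = (LINT x : A | lborel. reset_ac lam xi v1 v2 x t)"
    by (simp add: integral_s set_lebesgue_integral_def)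
  finally show "xi * (LINT s : {0..t} | lborel. exp (- xi * s) * (LINT x : A | lborel. p_ac lam v1 v2 s x))
      = (LINT x : A | lborel. reset_ac lam xi v1 v2 x t)" .
qed

definition ptilde_cond_ac :: "real \<Rightarrow> real \<Rightarrow> real \<Rightarrow> real \<Rightarrow> real \<Rightarrow> real \<Rightarrow> real \<Rightarrow> real" where
  "ptilde_cond_ac lam xi v1 v2 vj x t =
     H_ac lam xi vj x t + exp (- xi * t) * p_ac lam v1 v2 t x + reset_ac lam xi v1 v2 x t"

lemma Ptilde_cond_eq:
  fixes lam xi v1 v2 vj t :: real
  assumes lam: "0 < lam" and xi: "0 < xi" and v: "v2 < v1"
    and regime: "(v2 < 0 \<and> 0 < v1) \<or> 0 < v2" and vj: "vj \<noteq> 0" and t: "0 \<le> t"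
    and A: "A \<in> sets borel"
  shows "set_integrable lborel A (\<lambda>x. ptilde_cond_ac lam xi v1 v2 vj x t)"
    and "Ptilde_cond lam xi v1 v2 vj t A
         = H_atom lam xi t * indicator A (vj * t)
           + (LINT x : A | lborel. ptilde_cond_ac lam xi v1 v2 vj x t)"
proof -
  note atom_int = set_integrable_reset_atom[OF less_imp_le[OF lam] less_imp_le[OF xi] A, of t vj]
  note atom = reset_integral_atom[OF less_imp_le[OF lam] less_imp_le[OF xi] vj A, of t]
  note reset = reset_integral_p_ac[OF lam xi v regime t A]
  have p_int: "set_integrable lborel A (\<lambda>x. exp (- xi * t) * p_ac lam v1 v2 t x)"
    using set_integrable_p_ac[OF less_imp_le[OF lam] v t A] by simp
  show "set_integrable lborel A (\<lambda>x. ptilde_cond_ac lam xi v1 v2 vj x t)"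
    unfolding ptilde_cond_ac_def using atom(1) p_int reset(2) by simp
  have "(LINT s : {0..t} | lborel. exp (- xi * s) * P_cond lam v1 v2 vj s A)
      = (LINT s : {0..t} | lborel. exp (- xi * s) * (indicator A (vj * s) / (1 + lam * s)))
        + (LINT s : {0..t} | lborel. exp (- xi * s) * (LINT x : A | lborel. p_ac lam v1 v2 s x))"
    using set_integral_add(2)[OF atom_int reset(1)] by (simp add: P_cond_eq distrib_left)
  moreover have "(LINT x : A | lborel. ptilde_cond_ac lam xi v1 v2 vj x t)
      = (LINT x : A | lborel. H_ac lam xi vj x t)
        + exp (- xi * t) * (LINT x : A | lborel. p_ac lam v1 v2 t x)
        + (LINT x : A | lborel. reset_ac lam xi v1 v2 x t)"
    unfolding ptilde_cond_ac_def using atom(1) p_int reset(2) by simp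
  ultimately show "Ptilde_cond lam xi v1 v2 vj t A
      = H_atom lam xi t * indicator A (vj * t)
        + (LINT x : A | lborel. ptilde_cond_ac lam xi v1 v2 vj x t)"
    unfolding Ptilde_cond_def using atom(2) reset(3)
    by (simp add: P_cond_eq H_atom_def distrib_left)
qed

lemma ptilde_ac_eq_mixture:
  "ptilde_ac lam xi v1 v2 q x t
     = q * ptilde_cond_ac lam xi v1 v2 v1 x t + (1 - q) * ptilde_cond_ac lam xi v1 v2 v2 x t"
proof -
  have "ptilde_ac lam xi v1 v2 q x t
      = q * H_ac lam xi v1 x t + (1 - q) * H_ac lam xi v2 x t
        + exp (- xi * t) * p_ac lam v1 v2 t x + reset_ac lam xi v1 v2 x t"
    by (simp add: ptilde_ac_def p_ac_def reset_ac_def mult_ac)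
  also have "\<dots> = q * ptilde_cond_ac lam xi v1 v2 v1 x t + (1 - q) * ptilde_cond_ac lam xi v1 v2 v2 x t"
    by (simp add: ptilde_cond_ac_def algebra_simps)
  finally show ?thesis .
qed

theorem theorem3:
  fixes lam xi v1 v2 q t :: real and A :: "real set"
  assumes "lam > 0" and "xi > 0" and "v2 < v1"
    and "(v2 < 0 \<and> 0 < v1) \<or> 0 < v2"
    and "0 \<le> q" and "q \<le> 1"
    and "t > 0"
    and "A \<in> sets borel" and "A \<subseteq> {v2 * t .. v1 * t}"
  shows "Ptilde lam xi v1 v2 q t A =
           q * H_atom lam xi t * indicator A (v1 * t)
         + (1 - q) * H_atom lam xi t * indicator A (v2 * t)
         + (LINT x : A | lborel. ptilde_ac lam xi v1 v2 q x t)"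
proof -
  have "v1 \<noteq> 0" and "v2 \<noteq> 0"
    using assms(3,4) by auto
  note cond1 = Ptilde_cond_eq[OF assms(1-4) \<open>v1 \<noteq> 0\<close> less_imp_le[OF assms(7)] assms(8)]
  note cond2 = Ptilde_cond_eq[OF assms(1-4) \<open>v2 \<noteq> 0\<close> less_imp_le[OF assms(7)] assms(8)]
  have "(LINT x : A | lborel. ptilde_ac lam xi v1 v2 q x t)
      = q * (LINT x : A | lborel. ptilde_cond_ac lam xi v1 v2 v1 x t)
        + (1 - q) * (LINT x : A | lborel. ptilde_cond_ac lam xi v1 v2 v2 x t)"
    using cond1(1) cond2(1) by (simp add: ptilde_ac_eq_mixture)
  then show ?thesis
    unfolding Ptilde_def cond1(2) cond2(2) by (simp add: algebra_simps)
qed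

end
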